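(* Let $q\in(-\infty,q_1)$ and let $P^{u,+}(q)$, $P^{u,-}(q)$ be the limits of $P_1^u(q-i\eta)$, resp. $P_1^u(q+i\eta)$, as $\eta\downarrow0$ (these are complex conjugate), and define $P^{v,\pm}(q)$ similarly from $P_1^v$. Suppose complex numbers $m(q),n(q),E$ and values $\ell_1(P^{u,\pm}(q))$, $\ell_2(P^{v,\pm}(q))$ satisfy, for both signs $\pm$, $$A(P^{u,\pm}(q),q)\,m(q)+\theta\,n(q)+C(P^{u,\pm}(q),q)\,\ell_1(P^{u,\pm}(q))+E=0,$$ $$B(P^{v,\pm}(q),q)\,m(q)-\theta\,n(q)+D(P^{v,\pm}(q),q)\,\ell_2(P^{v,\pm}(q))-E=0.$$ Put $\alpha=A(P^{u,+}(q),q)$, $\beta=B(P^{v,+}(q),q)$, $\gamma=C(P^{u,+}(q),q)$, $\delta=D(P^{v,+}(q),q)$ (so that $\bar\alpha=A(P^{u,-}(q),q)$ etc.), $\Delta(q)=-(\alpha+\beta)=-\theta(q+P^{u,+}(q)+P^{v,+}(q))$, and assume $\gamma\ne0$, $\delta\neq0$, $\Delta(q)\ne0$. Then, with $L^\pm(q)=\big(\ell_1(P^{u,\pm}(q)),\ell_2(P^{v,\pm}(q))\big)^{T}$, $$L^+(q)=G(q)L^-(q),\qquad G(q)=\frac{1}{\overline{\Delta(q)}}\begin{pmatrix}-\frac{\bar\gamma(\alpha+\bar\beta)}{\gamma}&\frac{\bar\delta(\bar\alpha-\alpha)}{\gamma}\\[2pt]\frac{\bar\gamma(\bar\beta-\b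eta)}{\delta}&-\frac{\bar\delta(\beta+\bar\alpha)}{\delta}\end{pmatrix}.$$
   Context: $\sigma_1,\sigma_2,\rho$ real with $\sigma_1\sigma_2-\rho^2>0$, $\theta=\frac{\sigma_1+\sigma_2-2\rho}{2}$, $\mu_1,\mu_2,r_1,r_2$ real. $U(p,q)=\theta p^2+\frac{\sigma_2}{2}q^2+(\sigma_2-\rho)pq+(\mu_2-\mu_1)p+\mu_2q$, $V(p,q)=\theta p^2+\frac{\sigma_1}{2}q^2+(\sigma_1-\rho)pq+(\mu_1-\mu_2)p+\mu_1q$; $A(p,q)=\frac{\theta(2p+q)}{2}+\frac{(\sigma_2-\sigma_1)q}{2}+\mu_2-\mu_1$, $B(p,q)=\frac{\theta(2p+q)}{2}+\frac{(\sigma_1-\sigma_2)q}{2}+\mu_1-\mu_2$, $C(p,q)=(1-r_1)p+q$, $D(p,q)=(1-r_2)p+q$. $q_1\le q_2$ are the real roots of $(\rho^2-\sigma_1\sigma_2)q^2+2[\mu_1(\rho-\sigma_2)+\mu_2(\rho-\sigma_1)]q+(\mu_1-\mu_2)^2=0$; $P_1^u$ (resp. $P_1^v$) is the root in $p$ of $U(p,q)=0$ (resp. $V(p,q)=0$) with the smaller real part, analytic on $\mathbb{C}\setminus((-\infty,q_1]\cup[q_2,\infty))$. In the application, $m,n$ are the diagonal Laplace transforms of the stationary density, $E$ a constant, and $\ell_1(p)=\int_{-\infty}^0e^{-pz}\nu_1(z)\mathrm{d}z$, $\ell_2(p)=\int_{-\infty}^0e^{-pz}\nu_2(z)\mathrm{d}z$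 (continued meromorphically) for the reflected Brownian motion in the three-quarter plane. *)

theory Defs
  imports "HOL-Analysis.Analysis"
begin

definition theta :: "real \<Rightarrow> real \<Rightarrow> real \<Rightarrow> real" where
  "theta s1 s2 rho = (s1 + s2 - 2 * rho) / 2"

definition Ufun :: "real \<Rightarrow> real \<Rightarrow> real \<Rightarrow> real \<Rightarrow> real \<Rightarrow> complex \<Rightarrow> complex \<Rightarrow> complex" where
  "Ufun s1 s2 rho mu1 mu2 p q =
     of_real (theta s1 s2 rho) * p^2 + of_real (s2 / 2) * q^2 + of_real (s2 - rho) * p * q
     + of_real (mu2 - mu1) * p + of_real mu2 * q"

definition Vfun :: "real \<Rightarrow> real \<Rightarrow> real \<Rightarrow> real \<Rightarrow> real \<Rightarrow> complex \<Rightarrow> complex \<Rightarrow> complex" where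
  "Vfun s1 s2 rho mu1 mu2 p q =
     of_real (theta s1 s2 rho) * p^2 + of_real (s1 / 2) * q^2 + of_real (s1 - rho) * p * q
     + of_real (mu1 - mu2) * p + of_real mu1 * q"

definition Afun :: "real \<Rightarrow> real \<Rightarrow> real \<Rightarrow> real \<Rightarrow> real \<Rightarrow> complex \<Rightarrow> complex \<Rightarrow> complex" where
  "Afun s1 s2 rho mu1 mu2 p q =
     of_real (theta s1 s2 rho) * (2 * p + q) / 2 + of_real (s2 - s1) * q / 2 + of_real (mu2 - mu1)"

definition Bfun :: "real \<Rightarrow> real \<Rightarrow> real \<Rightarrow> real \<Rightarrow> real \<Rightarrow> complex \<Rightarrow> complex \<Rightarrow> complex" where
  "Bfun s1 s2 rho mu1 mu2 p q =
     of_real (theta s1 s2 rho) * (2 * p + q) / 2 + of_real (s1 - s2) * q / 2 + of_real (mu1 - mu2)"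

definition Cfun :: "real \<Rightarrow> complex \<Rightarrow> complex \<Rightarrow> complex" where
  "Cfun r1 p q = of_real (1 - r1) * p + q"

definition Dfun :: "real \<Rightarrow> complex \<Rightarrow> complex \<Rightarrow> complex" where
  "Dfun r2 p q = of_real (1 - r2) * p + q"

text \<open>The polynomial whose real roots are q1 \<le> q2.\<close>
definition branchpoly :: "real \<Rightarrow> real \<Rightarrow> real \<Rightarrow> real \<Rightarrow> real \<Rightarrow> real \<Rightarrow> real" where
  "branchpoly s1 s2 rho mu1 mu2 q =
     (rho^2 - s1 * s2) * q^2 + 2 * (mu1 * (rho - s2) + mu2 * (rho - s1)) * q + (mu1 - mu2)^2"

definition slit_domain :: "real \<Rightarrow> real \<Rightarrow> complex set" where
  "slit_domain q1 q2 = {z. Im z \<noteq> 0 \<or> (q1 < Re z \<and> Re z < q2)}"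

end

theory Submission
  imports Defs
begin

text \<open>The pairs of equations for the two signs form a linear system in the unknowns
  \<open>m\<close>, \<open>\<theta> n + E\<close>, \<open>\<ell>\<^sub>1(P\<^sup>u\<^sup>,\<^sup>+)\<close>, \<open>\<ell>\<^sub>2(P\<^sup>v\<^sup>,\<^sup>+)\<close>, which is solved by elimination once the
  coefficients of the minus-equations are known to be the complex conjugates of those of the
  plus-equations. That is the analytic content: \<open>P\<^sub>1\<^sup>u(q - i\<eta>)\<close> and \<open>P\<^sub>1\<^sup>u(q + i\<eta>)\<close> are both
  roots of the real quadratic \<open>U(\<cdot>, q + i\<eta>)\<close> of minimal real part, so they are conjugate as
  soon as two roots with equal real part must coincide. Two distinct roots with equal real
  part would make the discriminant, which is the branch polynomial evaluated at \<open>q + i\<eta>\<close>,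
  real; but its imaginary part is \<open>\<eta>\<close> times the derivative of the branch polynomial at \<open>q\<close>,
  and that derivative is positive left of the roots \<open>q\<^sub>1 \<le> q\<^sub>2\<close> of this downward parabola.\<close>

definition branchpoly_deriv :: "real \<Rightarrow> real \<Rightarrow> real \<Rightarrow> real \<Rightarrow> real \<Rightarrow> real \<Rightarrow> real" where
  "branchpoly_deriv s1 s2 rho mu1 mu2 x =
     2 * (rho^2 - s1 * s2) * x + 2 * (mu1 * (rho - s2) + mu2 * (rho - s1))"

lemma theta_nonzero:
  assumes "s1 * s2 - rho^2 > 0"
  shows "theta s1 s2 rho \<noteq> 0"
proof
  assume "theta s1 s2 rho = 0"
  then have rho: "rho = (s1 + s2) / 2"
    by (simp add: theta_def)
  have "(s1 - s2)^2 = 4 * (rho^2 - s1 * s2)"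
    unfolding rho by (simp add: power2_eq_square algebra_simps)
  with assms show False
    by (smt (verit) zero_le_power2)
qed

lemma Vfun_eq_Ufun_swap: "Vfun s1 s2 rho mu1 mu2 = Ufun s2 s1 rho mu2 mu1"
  by (simp add: fun_eq_iff Vfun_def Ufun_def theta_def algebra_simps)

lemma branchpoly_deriv_swap:
  "branchpoly_deriv s2 s1 rho mu2 mu1 x = branchpoly_deriv s1 s2 rho mu1 mu2 x"
  by (simp add: branchpoly_deriv_def algebra_simps)

lemma branchpoly_deriv_pos_below_roots:
  assumes cov: "s1 * s2 - rho^2 > 0"
    and q12: "q1 \<le> q2"
    and roots: "\<forall>x. branchpoly s1 s2 rho mu1 mu2 x = 0 \<longleftrightarrow> x = q1 \<or> x = q2"
    and "q < q1"
  shows "branchpoly_deriv s1 s2 rho mu1 mu2 q > 0"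
proof -
  define a where "a = rho^2 - s1 * s2"
  define b where "b = 2 * (mu1 * (rho - s2) + mu2 * (rho - s1))"
  define v where "v = - b / a"
  have "a < 0"
    using cov by (simp add: a_def)
  then have b: "b = - a * v"
    by (simp add: v_def)
  have poly: "branchpoly s1 s2 rho mu1 mu2 x = a * x^2 + b * x + (mu1 - mu2)^2" for x
    by (simp add: branchpoly_def a_def b_def)
  have "branchpoly s1 s2 rho mu1 mu2 (v - x) = branchpoly s1 s2 rho mu1 mu2 x" for x
    unfolding poly b by (simp add: power2_eq_square algebra_simps)
  then have "v - q1 = q1 \<or> v - q1 = q2"
    using roots by metis
  with q12 \<open>q < q1\<close> have "2 * q - v < 0"
    by auto
  have "branchpoly_deriv s1 s2 rho mu1 mu2 q = 2 * a * q + b"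
    by (simp add: branchpoly_deriv_def a_def b_def)
  also have "\<dots> = a * (2 * q - v)"
    by (simp add: b algebra_simps)
  finally show ?thesis
    using \<open>a < 0\<close> \<open>2 * q - v < 0\<close> by (simp add: mult_neg_neg)
qed

lemma quadratic_roots_eq_if_Re_eq:
  fixes a :: real and b c x y :: complex
  assumes "a \<noteq> 0"
    and x: "of_real a * x^2 + b * x + c = 0"
    and y: "of_real a * y^2 + b * y + c = 0"
    and "Re x = Re y"
    and disc: "Im (b^2 - 4 * of_real a * c) \<noteq> 0"
  shows "x = y"
proof (rule ccontr)
  assume "x \<noteq> y"
  have "(x - y) * (of_real a * (x + y) + b) = (of_real a * x^2 + b * x + c) - (of_real a * y^2 + b * y + c)"
    by (simp add: algebra_simps power2_eq_square)
  then have "(x - y) * (of_real a * (x + y) + b) = 0"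
    using x y by simp
  with \<open>x \<noteq> y\<close> have "of_real a * (x + y) + b = 0"
    by simp
  then have "2 * of_real a * x + b = of_real a * (x - y)"
    by (simp add: algebra_simps add_eq_0_iff2)
  moreover have "(2 * of_real a * x + b)^2 = b^2 - 4 * of_real a * c + 4 * of_real a * (of_real a * x^2 + b * x + c)"
    by (simp add: algebra_simps power2_eq_square)
  moreover have "Im ((of_real a * (x - y))^2) = 0"
    using \<open>Re x = Re y\<close> by (simp add: power2_eq_square)
  ultimately show False
    using disc x by simp
qed

lemma Ufun_roots_eq_if_Re_eq:
  assumes cov: "s1 * s2 - rho^2 > 0"
    and "Im w \<noteq> 0"
    and "branchpoly_deriv s1 s2 rho mu1 mu2 (Re w) \<noteq> 0"
    and "Ufun s1 s2 rho mu1 mu2 x w = 0" "Ufun s1 s2 rho mu1 mu2 y w = 0"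
    and "Re x = Re y"
  shows "x = y"
proof -
  define b where "b = of_real (s2 - rho) * w + of_real (mu2 - mu1)"
  define c where "c = of_real (s2 / 2) * w^2 + of_real mu2 * w"
  have U: "Ufun s1 s2 rho mu1 mu2 p w = of_real (theta s1 s2 rho) * p^2 + b * p + c" for p
    by (simp add: Ufun_def b_def c_def algebra_simps)
  \<comment> \<open>the discriminant of \<open>U(\<cdot>, w)\<close> is the branch polynomial at \<open>w\<close>\<close>
  have "Im (b^2 - 4 * of_real (theta s1 s2 rho) * c) = Im w * branchpoly_deriv s1 s2 rho mu1 mu2 (Re w)"
    by (simp add: b_def c_def theta_def branchpoly_deriv_def power2_eq_square field_simps)
  with assms show ?thesis
    using quadratic_roots_eq_if_Re_eq[OF theta_nonzero[OF cov], of x b c y] by (simp add: U)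
qed

lemma minimal_root_cnj:
  fixes f :: "complex \<Rightarrow> complex \<Rightarrow> complex"
  assumes f_cnj: "\<And>p z. cnj (f p z) = f (cnj p) (cnj z)"
    and P_root: "\<forall>z\<in>S. f (P z) z = 0 \<and> (\<forall>p. f p z = 0 \<longrightarrow> Re (P z) \<le> Re p)"
    and "z \<in> S" "cnj z \<in> S"
    and unique: "\<And>x y. f x (cnj z) = 0 \<Longrightarrow> f y (cnj z) = 0 \<Longrightarrow> Re x = Re y \<Longrightarrow> x = y"
  shows "P (cnj z) = cnj (P z)"
proof (rule unique)
  show root: "f (P (cnj z)) (cnj z) = 0"
    using P_root \<open>cnj z \<in> S\<close> by blast
  show cnj_root: "f (cnj (P z)) (cnj z) = 0"
    using P_root \<open>z \<in> S\<close> f_cnj[of "P z" z] by simp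
  have "f (cnj (P (cnj z))) z = 0"
    using root f_cnj[of "P (cnj z)" "cnj z"] by simp
  then have "Re (P z) \<le> Re (P (cnj z))"
    using P_root \<open>z \<in> S\<close> by fastforce
  moreover have "Re (P (cnj z)) \<le> Re (P z)"
    using P_root \<open>cnj z \<in> S\<close> cnj_root by fastforce
  ultimately show "Re (P (cnj z)) = Re (cnj (P z))"
    by simp
qed

lemma Ufun_cnj: "cnj (Ufun s1 s2 rho mu1 mu2 p z) = Ufun s1 s2 rho mu1 mu2 (cnj p) (cnj z)"
  by (simp add: Ufun_def)

lemma Ufun_boundary_values_cnj:
  fixes P :: "complex \<Rightarrow> complex"
  assumes cov: "s1 * s2 - rho^2 > 0"
    and deriv: "branchpoly_deriv s1 s2 rho mu1 mu2 q \<noteq> 0"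
    and P_root: "\<forall>z\<in>slit_domain q1 q2. Ufun s1 s2 rho mu1 mu2 (P z) z = 0 \<and>
                   (\<forall>p. Ufun s1 s2 rho mu1 mu2 p z = 0 \<longrightarrow> Re (P z) \<le> Re p)"
    and lim_p: "((\<lambda>\<eta>::real. P (of_real q - \<i> * of_real \<eta>)) \<longlongrightarrow> Pp) (at_right 0)"
    and lim_m: "((\<lambda>\<eta>::real. P (of_real q + \<i> * of_real \<eta>)) \<longlongrightarrow> Pm) (at_right 0)"
  shows "Pm = cnj Pp"
proof -
  have sym: "P (of_real q + \<i> * of_real \<eta>) = cnj (P (of_real q - \<i> * of_real \<eta>))" if "\<eta> > 0" for \<eta>
  proof -
    define z where "z = of_real q - \<i> * of_real \<eta>"
    have "z \<in> slit_domain q1 q2" "cnj z \<in> slit_domain q1 q2"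
      using \<open>\<eta> > 0\<close> by (auto simp: slit_domain_def z_def)
    moreover have "x = y" if "Ufun s1 s2 rho mu1 mu2 x (cnj z) = 0"
      "Ufun s1 s2 rho mu1 mu2 y (cnj z) = 0" "Re x = Re y" for x y
      using Ufun_roots_eq_if_Re_eq[OF cov _ _ that] \<open>\<eta> > 0\<close> deriv by (simp add: z_def)
    ultimately have "P (cnj z) = cnj (P z)"
      by (rule minimal_root_cnj[OF Ufun_cnj P_root])
    then show ?thesis
      by (simp add: z_def)
  qed
  have "\<forall>\<^sub>F \<eta> in at_right 0. cnj (P (of_real q - \<i> * of_real \<eta>)) = P (of_real q + \<i> * of_real \<eta>)"
    using eventually_at_right_less[of "0::real"] by (rule eventually_mono) (simp add: sym)
  with tendsto_cnj[OF lim_p] have "((\<lambda>\<eta>::real. P (of_real q + \<i> * of_real \<eta>)) \<longlongrightarrow> cnj Pp) (at_right 0)"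
    by (rule Lim_transform_eventually)
  with lim_m show ?thesis
    using tendsto_unique[OF trivial_limit_at_right_real] by blast
qed

lemma paired_linear_system_solution:
  fixes \<alpha> \<beta> \<gamma> \<delta> \<alpha>' \<beta>' \<gamma>' \<delta>' m t l1p l1m l2p l2m :: "'a :: field"
  assumes e1p: "\<alpha> * m + t + \<gamma> * l1p = 0" and e1m: "\<alpha>' * m + t + \<gamma>' * l1m = 0"
    and e2p: "\<beta> * m - t + \<delta> * l2p = 0" and e2m: "\<beta>' * m - t + \<delta>' * l2m = 0"
    and "\<gamma> \<noteq> 0" "\<delta> \<noteq> 0" "\<alpha>' + \<beta>' \<noteq> 0"
  shows "l1p = (1 / (- (\<alpha>' + \<beta>'))) * ((- \<gamma>' * (\<alpha> + \<beta>') / \<gamma>) * l1m + (\<delta>' * (\<alpha>' - \<alpha>) / \<gamma>) * l2m) \<and>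
         l2p = (1 / (- (\<alpha>' + \<beta>'))) * ((\<gamma>' * (\<beta>' - \<beta>) / \<delta>) * l1m + (- \<delta>' * (\<beta> + \<alpha>') / \<delta>) * l2m)"
proof -
  define D where "D = \<alpha>' + \<beta>'"
  have "D \<noteq> 0"
    using \<open>\<alpha>' + \<beta>' \<noteq> 0\<close> by (simp add: D_def)
  have "D * m + (\<gamma>' * l1m + \<delta>' * l2m) = (\<alpha>' * m + t + \<gamma>' * l1m) + (\<beta>' * m - t + \<delta>' * l2m)"
    by (simp add: D_def algebra_simps)
  then have m: "D * m = - (\<gamma>' * l1m + \<delta>' * l2m)"
    using e1m e2m by (simp add: add_eq_0_iff2)
  have "\<gamma> * l1p - (\<gamma>' * l1m + (\<alpha>' - \<alpha>) * m) = (\<alpha> * m + t + \<gamma> * l1p) - (\<alpha>' * m + t + \<gamma>' * l1m)"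
    by (simp add: algebra_simps)
  then have l1p: "\<gamma> * l1p = \<gamma>' * l1m + (\<alpha>' - \<alpha>) * m"
    using e1p e1m by simp
  have "D * (\<gamma> * l1p) = D * (\<gamma>' * l1m) + (\<alpha>' - \<alpha>) * (D * m)"
    unfolding l1p by (simp add: algebra_simps)
  then have "D * \<gamma> * l1p = \<gamma>' * (\<alpha> + \<beta>') * l1m - \<delta>' * (\<alpha>' - \<alpha>) * l2m"
    unfolding m by (simp add: D_def algebra_simps)
  with \<open>D \<noteq> 0\<close> \<open>\<gamma> \<noteq> 0\<close>
  have l1p_sol: "l1p = (\<gamma>' * (\<alpha> + \<beta>') * l1m - \<delta>' * (\<alpha>' - \<alpha>) * l2m) / (D * \<gamma>)"
    by (simp add: eq_divide_eq ac_simps)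
  have "\<delta> * l2p - (\<delta>' * l2m + (\<beta>' - \<beta>) * m) = (\<beta> * m - t + \<delta> * l2p) - (\<beta>' * m - t + \<delta>' * l2m)"
    by (simp add: algebra_simps)
  then have l2p: "\<delta> * l2p = \<delta>' * l2m + (\<beta>' - \<beta>) * m"
    using e2p e2m by simp
  have "D * (\<delta> * l2p) = D * (\<delta>' * l2m) + (\<beta>' - \<beta>) * (D * m)"
    unfolding l2p by (simp add: algebra_simps)
  then have "D * \<delta> * l2p = \<delta>' * (\<beta> + \<alpha>') * l2m - \<gamma>' * (\<beta>' - \<beta>) * l1m"
    unfolding m by (simp add: D_def algebra_simps)
  with \<open>D \<noteq> 0\<close> \<open>\<delta> \<noteq> 0\<close>
  have l2p_sol: "l2p = (\<delta>' * (\<beta> + \<alpha>') * l2m - \<gamma>' * (\<beta>' - \<beta>) * l1m) / (D * \<delta>)"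
    by (simp add: eq_divide_eq ac_simps)
  show ?thesis
    unfolding l1p_sol l2p_sol D_def[symmetric] using \<open>D \<noteq> 0\<close> \<open>\<gamma> \<noteq> 0\<close> \<open>\<delta> \<noteq> 0\<close>
    by (simp add: field_simps)
qed

theorem theorem4p4:
  fixes s1 s2 rho mu1 mu2 r1 r2 q1 q2 q :: real
    and P1u P1v :: "complex \<Rightarrow> complex"
    and Pup Pum Pvp Pvm m n E l1p l1m l2p l2m :: complex
  assumes cov: "s1 * s2 - rho^2 > 0"
    and q12: "q1 \<le> q2"
    and q12_roots: "\<forall>x::real. branchpoly s1 s2 rho mu1 mu2 x = 0 \<longleftrightarrow> (x = q1 \<or> x = q2)"
    and P1u_an: "P1u analytic_on slit_domain q1 q2"
    and P1u_root: "\<forall>z\<in>slit_domain q1 q2. Ufun s1 s2 rho mu1 mu2 (P1u z) z = 0 \<and>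
                     (\<forall>p. Ufun s1 s2 rho mu1 mu2 p z = 0 \<longrightarrow> Re (P1u z) \<le> Re p)"
    and P1v_an: "P1v analytic_on slit_domain q1 q2"
    and P1v_root: "\<forall>z\<in>slit_domain q1 q2. Vfun s1 s2 rho mu1 mu2 (P1v z) z = 0 \<and>
                     (\<forall>p. Vfun s1 s2 rho mu1 mu2 p z = 0 \<longrightarrow> Re (P1v z) \<le> Re p)"
    and hq: "q < q1"
    and lim_up: "((\<lambda>\<eta>::real. P1u (complex_of_real q - \<i> * complex_of_real \<eta>)) \<longlongrightarrow> Pup) (at_right 0)"
    and lim_um: "((\<lambda>\<eta>::real. P1u (complex_of_real q + \<i> * complex_of_real \<eta>)) \<longlongrightarrow> Pum) (at_right 0)"
    and lim_vp: "((\<lambda>\<eta>::real. P1v (complex_of_real q - \<i> * complex_of_real \<eta>)) \<longlongrightarrow> Pvp) (at_right 0)"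
    and lim_vm: "((\<lambda>\<eta>::real. P1v (complex_of_real q + \<i> * complex_of_real \<eta>)) \<longlongrightarrow> Pvm) (at_right 0)"
    and eq1p: "Afun s1 s2 rho mu1 mu2 Pup q * m + of_real (theta s1 s2 rho) * n
               + Cfun r1 Pup q * l1p + E = 0"
    and eq1m: "Afun s1 s2 rho mu1 mu2 Pum q * m + of_real (theta s1 s2 rho) * n
               + Cfun r1 Pum q * l1m + E = 0"
    and eq2p: "Bfun s1 s2 rho mu1 mu2 Pvp q * m - of_real (theta s1 s2 rho) * n
               + Dfun r2 Pvp q * l2p - E = 0"
    and eq2m: "Bfun s1 s2 rho mu1 mu2 Pvm q * m - of_real (theta s1 s2 rho) * n
               + Dfun r2 Pvm q * l2m - E = 0"
    and hgamma: "Cfun r1 Pup q \<noteq> 0"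
    and hdelta: "Dfun r2 Pvp q \<noteq> 0"
    and hDelta: "- (Afun s1 s2 rho mu1 mu2 Pup q + Bfun s1 s2 rho mu1 mu2 Pvp q) \<noteq> 0"
  shows "let \<alpha> = Afun s1 s2 rho mu1 mu2 Pup q; \<beta> = Bfun s1 s2 rho mu1 mu2 Pvp q;
             \<gamma> = Cfun r1 Pup q; \<delta> = Dfun r2 Pvp q; \<Delta> = - (\<alpha> + \<beta>) in
         l1p = (1 / cnj \<Delta>) * ((- cnj \<gamma> * (\<alpha> + cnj \<beta>) / \<gamma>) * l1m
                                + (cnj \<delta> * (cnj \<alpha> - \<alpha>) / \<gamma>) * l2m) \<and>
         l2p = (1 / cnj \<Delta>) * ((cnj \<gamma> * (cnj \<beta> - \<beta>) / \<delta>) * l1m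
                                + (- cnj \<delta> * (\<beta> + cnj \<alpha>) / \<delta>) * l2m)"
proof -
  have deriv: "branchpoly_deriv s1 s2 rho mu1 mu2 q \<noteq> 0"
    using branchpoly_deriv_pos_below_roots[OF cov q12 q12_roots hq] by simp
  have Pum: "Pum = cnj Pup"
    using Ufun_boundary_values_cnj[OF cov deriv P1u_root lim_up lim_um] .
  have Pvm: "Pvm = cnj Pvp"
    using Ufun_boundary_values_cnj[of s2 s1 rho mu2 mu1 q q1 q2 P1v, OF _ _ _ lim_vp lim_vm]
      cov deriv P1v_root by (simp add: Vfun_eq_Ufun_swap branchpoly_deriv_swap mult.commute)
  define \<alpha> \<beta> \<gamma> \<delta> where "\<alpha> = Afun s1 s2 rho mu1 mu2 Pup q" and "\<beta> = Bfun s1 s2 rho mu1 mu2 Pvp q"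
    and "\<gamma> = Cfun r1 Pup q" and "\<delta> = Dfun r2 Pvp q"
  have "Afun s1 s2 rho mu1 mu2 Pum q = cnj \<alpha>" "Bfun s1 s2 rho mu1 mu2 Pvm q = cnj \<beta>"
    "Cfun r1 Pum q = cnj \<gamma>" "Dfun r2 Pvm q = cnj \<delta>"
    by (simp_all add: Pum Pvm Afun_def Bfun_def Cfun_def Dfun_def \<alpha>_def \<beta>_def \<gamma>_def \<delta>_def)
  then have "\<alpha> * m + (of_real (theta s1 s2 rho) * n + E) + \<gamma> * l1p = 0"
    "cnj \<alpha> * m + (of_real (theta s1 s2 rho) * n + E) + cnj \<gamma> * l1m = 0"
    "\<beta> * m - (of_real (theta s1 s2 rho) * n + E) + \<delta> * l2p = 0"
    "cnj \<beta> * m - (of_real (theta s1 s2 rho) * n + E) + cnj \<delta> * l2m = 0"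
    using eq1p eq1m eq2p eq2m by (simp_all add: \<alpha>_def \<beta>_def \<gamma>_def \<delta>_def algebra_simps)
  moreover have "cnj \<alpha> + cnj \<beta> \<noteq> 0"
    using hDelta by (simp add: \<alpha>_def \<beta>_def add_eq_0_iff flip: complex_cnj_add)
  ultimately show ?thesis
    using paired_linear_system_solution hgamma hdelta
    by (simp add: Let_def flip: \<alpha>_def \<beta>_def \<gamma>_def \<delta>_def)
qed

end
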